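(* Let $d\ge1$, $p\ge1$, $\sigma>0$, $\alpha>0$, and let $F$, $U$, $g$, $\Phi$ be as in the context, satisfying the standing assumption there. Assume moreover that $\Phi:\mathcal P_p(\mathbb R^d)\to\mathcal P_p(\mathbb R^d)$ admits a unique fixed point, and that $m_0\in\mathcal P_{p'}(\mathbb R^d)$ for some $p'>p$ with $H(m_0|g)<+\infty$. Let $(m_t)_{t\ge0}$ be a solution in $\mathcal W_p$ of the entropic fictitious play $\frac{dm_t}{dt}=\alpha(\hat m_t-m_t)$ with initial value $m_0$, with densities $m_t(\cdot)$, $\hat m_t(\cdot)$. Fix $s>0$. Then there exist integrable functions $f,g_0:\mathbb R^d\to\mathbb R$ such that for every $t\in[s,+\infty)$ and every $x\in\mathbb R^d$, \[ g_0(x)\le\log\frac{m_t(x)}{e^{-U(x)}}\bigl(\hat m_t(x)-m_t(x)\bigr)\le f(x). \]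
   Context: $\mathcal P(\mathbb R^d)$ denotes the Borel probability measures on $\mathbb R^d$, $\mathcal P_q(\mathbb R^d)$ those with finite $q$-th moment, $\mathcal W_p$ the $p$-Wasserstein distance (also the metric space $(\mathcal P_p(\mathbb R^d),\mathcal W_p)$). Standing assumption: (a) $F:\mathcal P(\mathbb R^d)\to\mathbb R$ is non-negative and there is a continuous function $\frac{\delta F}{\delta m}:\mathcal P(\mathbb R^d)\times\mathbb R^d\to\mathbb R$ such that for all $m_0,m_1$, $F(m_1)-F(m_0)=\int_0^1\int\frac{\delta F}{\delta m}(m_\lambda,x)\,(m_1-m_0)(dx)\,d\lambda$ with $m_\lambda=(1-\lambda)m_0+\lambda m_1$; and there are $L_F,M_F>0$ with $|\frac{\delta F}{\delta m}(m,x)-\frac{\delta F}{\delta m}(m',x')|\le L_F(\mathcal W_p(m,m')+|x-x'|)$ and $|\frac{\delta F}{\delta m}(m,x)|\le M_F$ for all $m,m',x,x'$. (b) $U:\mathbb R^d\to\mathbb R$ is measurable, $\int e^{-U}dx=1$, $\operatorname{ess\,inf}U>-\infty$, $\liminf_{|x|\to\infty}U(x)/|x|^p>0$. $g$ has density $e^{-U}$; $H(\mu|g)=\int\log\frac{d\mu}{dg}d\mu$ if $\mu\ll g$, $+\infty$ otherwise. For $m\in\mathcal P_p(\mathbb R^d)$, $\hat m=\Phi(m)$ is the probability measure with density $\hat m(x)\propto\exp(-\frac{2}{\sigma^2}\frac{\delta F}{\delta m}(m,x)-U(x))$ (the unique minimizer of $\mu\mapsto\int\frac{\delta F}{\delta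 m}(m,x)\mu(dx)+\frac{\sigma^2}{2}H(\mu|g)$). A solution in $\mathcal W_p$ is a flow $(m_t)_{t\ge0}\in C([0,+\infty);\mathcal W_p)$ satisfying $\frac{dm_t}{dt}=\alpha(\hat m_t-m_t)$, $\hat m_t:=\Phi(m_t)$, in the sense of distributions; its density is $m_t(x)=\int_0^t\alpha e^{-\alpha(t-u)}\hat m_u(x)\,du+e^{-\alpha t}m_0(x)$. *)

theory Defs
  imports "HOL-Probability.Probability"
begin

text \<open>Borel probability measures on the Euclidean space 'a (playing the role of R^d, d = DIM('a)).\<close>
definition probs :: "'a::euclidean_space measure set" where
  "probs = {M. prob_space M \<and> sets M = sets borel}"

definition probs_q :: "real \<Rightarrow> 'a::euclidean_space measure set" where
  "probs_q q = {M \<in> probs. (\<integral>\<^sup>+ x. ennreal (norm x powr q) \<partial>M) < \<infinity>}"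

definition couplings :: "'a::euclidean_space measure \<Rightarrow> 'a measure \<Rightarrow> ('a \<times> 'a) measure set" where
  "couplings \<mu> \<nu> = {\<pi>. prob_space \<pi> \<and> sets \<pi> = sets (borel \<Otimes>\<^sub>M borel)
      \<and> distr \<pi> borel fst = \<mu> \<and> distr \<pi> borel snd = \<nu>}"

definition wass_cost :: "real \<Rightarrow> 'a::euclidean_space measure \<Rightarrow> 'a measure \<Rightarrow> ennreal" where
  "wass_cost p \<mu> \<nu> = (INF \<pi>\<in>couplings \<mu> \<nu>. \<integral>\<^sup>+ z. ennreal (dist (fst z) (snd z) powr p) \<partial>\<pi>)"

text \<open>p-Wasserstein distance (meaningful when wass_cost is finite, e.g. on P_p).\<close>
definition Wp :: "real \<Rightarrow> 'a::euclidean_space measure \<Rightarrow> 'a measure \<Rightarrow> real" where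
  "Wp p \<mu> \<nu> = enn2real (wass_cost p \<mu> \<nu>) powr (1 / p)"

definition weak_conv_seq :: "(nat \<Rightarrow> 'a::euclidean_space measure) \<Rightarrow> 'a measure \<Rightarrow> bool" where
  "weak_conv_seq Ms M \<longleftrightarrow> (\<forall>\<phi>::'a \<Rightarrow> real. continuous_on UNIV \<phi> \<and> bounded (range \<phi>) \<longrightarrow>
      (\<lambda>n. \<integral>x. \<phi> x \<partial>(Ms n)) \<longlonglongrightarrow> (\<integral>x. \<phi> x \<partial>M))"

definition mix :: "real \<Rightarrow> 'a::euclidean_space measure \<Rightarrow> 'a measure \<Rightarrow> 'a measure" where
  "mix l m0 m1 = measure_of UNIV (sets borel)
      (\<lambda>A. ennreal (1 - l) * emeasure m0 A + ennreal l * emeasure m1 A)"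

definition standing_F :: "real \<Rightarrow> ('a::euclidean_space measure \<Rightarrow> real) \<Rightarrow> ('a measure \<Rightarrow> 'a \<Rightarrow> real) \<Rightarrow> bool" where
  "standing_F p F dF \<longleftrightarrow>
     (\<forall>m\<in>probs. F m \<ge> 0)
   \<and> (\<forall>Ms m xs x. (\<forall>n. Ms n \<in> probs) \<and> m \<in> probs \<and> weak_conv_seq Ms m \<and> xs \<longlonglongrightarrow> x
        \<longrightarrow> (\<lambda>n. dF (Ms n) (xs n)) \<longlonglongrightarrow> dF m x)
   \<and> (\<forall>m0\<in>probs. \<forall>m1\<in>probs.
        F m1 - F m0 = (LINT l:{0..1}|lborel.
           (\<integral>x. dF (mix l m0 m1) x \<partial>m1) - (\<integral>x. dF (mix l m0 m1) x \<partial>m0)))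
   \<and> (\<exists>L M. L > 0 \<and> M > 0
        \<and> (\<forall>m\<in>probs. \<forall>m'\<in>probs. \<forall>x x'. wass_cost p m m' < \<infinity> \<longrightarrow>
              \<bar>dF m x - dF m' x'\<bar> \<le> L * (Wp p m m' + dist x x'))
        \<and> (\<forall>m\<in>probs. \<forall>x. \<bar>dF m x\<bar> \<le> M))"

definition standing_U :: "real \<Rightarrow> ('a::euclidean_space \<Rightarrow> real) \<Rightarrow> bool" where
  "standing_U p U \<longleftrightarrow>
     U \<in> borel_measurable lborel
   \<and> (\<integral>\<^sup>+ x. ennreal (exp (- U x)) \<partial>lborel) = 1
   \<and> (\<exists>c. AE x in lborel. U x \<ge> c)
   \<and> (\<exists>c>0. \<forall>\<^sub>F x in at_infinity. U x / norm x powr p \<ge> c)"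

definition gmeas :: "('a::euclidean_space \<Rightarrow> real) \<Rightarrow> 'a measure" where
  "gmeas U = density lborel (\<lambda>x. ennreal (exp (- U x)))"

definition finite_rel_entropy :: "'a::euclidean_space measure \<Rightarrow> 'a measure \<Rightarrow> bool" where
  "finite_rel_entropy \<mu> g \<longleftrightarrow> absolutely_continuous g \<mu>
     \<and> integrable \<mu> (\<lambda>x. ln (enn2real (RN_deriv g \<mu> x)))"

definition Phi_dens :: "real \<Rightarrow> ('a::euclidean_space measure \<Rightarrow> 'a \<Rightarrow> real) \<Rightarrow> ('a \<Rightarrow> real)
    \<Rightarrow> 'a measure \<Rightarrow> 'a \<Rightarrow> real" where
  "Phi_dens \<sigma> dF U m x = exp (- 2 / \<sigma>\<^sup>2 * dF m x - U x)
      / (\<integral>y. exp (- 2 / \<sigma>\<^sup>2 * dF m y - U y) \<partial>lborel)"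

definition Phi :: "real \<Rightarrow> ('a::euclidean_space measure \<Rightarrow> 'a \<Rightarrow> real) \<Rightarrow> ('a \<Rightarrow> real)
    \<Rightarrow> 'a measure \<Rightarrow> 'a measure" where
  "Phi \<sigma> dF U m = density lborel (\<lambda>x. ennreal (Phi_dens \<sigma> dF U m x))"

text \<open>Solution in W_p of dm/dt = alpha (Phi(m_t) - m_t), in the weak (distributional) sense,
  written in integrated form against continuous compactly supported test functions.\<close>
definition efp_solution :: "real \<Rightarrow> real \<Rightarrow> real \<Rightarrow> ('a::euclidean_space measure \<Rightarrow> 'a \<Rightarrow> real)
    \<Rightarrow> ('a \<Rightarrow> real) \<Rightarrow> (real \<Rightarrow> 'a measure) \<Rightarrow> bool" where
  "efp_solution p \<sigma> \<alpha> dF U m \<longleftrightarrow>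
     (\<forall>t\<ge>0. m t \<in> probs_q p)
   \<and> (\<forall>t\<ge>0. \<forall>\<epsilon>>0. \<exists>\<delta>>0. \<forall>t'\<ge>0. \<bar>t' - t\<bar> < \<delta> \<longrightarrow> Wp p (m t') (m t) < \<epsilon>)
   \<and> (\<forall>\<phi>::'a \<Rightarrow> real. continuous_on UNIV \<phi> \<and> compact (closure {x. \<phi> x \<noteq> 0}) \<longrightarrow>
        (\<forall>t\<ge>0. (\<integral>x. \<phi> x \<partial>m t) - (\<integral>x. \<phi> x \<partial>m 0)
            = (LINT u:{0..t}|lborel. \<alpha> * ((\<integral>x. \<phi> x \<partial>Phi \<sigma> dF U (m u)) - (\<integral>x. \<phi> x \<partial>m u)))))"

text \<open>The density of m_t given by the Duhamel formula (rho0 = density of m_0).\<close>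
definition efp_dens :: "real \<Rightarrow> real \<Rightarrow> ('a::euclidean_space measure \<Rightarrow> 'a \<Rightarrow> real) \<Rightarrow> ('a \<Rightarrow> real)
    \<Rightarrow> (real \<Rightarrow> 'a measure) \<Rightarrow> ('a \<Rightarrow> real) \<Rightarrow> real \<Rightarrow> 'a \<Rightarrow> real" where
  "efp_dens \<sigma> \<alpha> dF U m \<rho>0 t x =
     (LINT u:{0..t}|lborel. \<alpha> * exp (- \<alpha> * (t - u)) * Phi_dens \<sigma> dF U (m u) x)
     + exp (- \<alpha> * t) * \<rho>0 x"

end

theory Submission
  imports Defs
begin

text \<open>Because \<open>dF\<close> is bounded by some \<open>M\<close>, every Gibbs density \<open>\<Phi>(m)\<close> is comparable to
  \<open>exp (-U)\<close> uniformly in \<open>m\<close>: \<open>exp (-U) / C \<le> \<Phi>(m) \<le> C exp (-U)\<close> with \<open>C = exp (4 M / \<sigma>\<^sup>2)\<close>.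
  Inserting this into the Duhamel formula gives, for \<open>t \<ge> s\<close>,
  \<open>(1 - exp (-\<alpha> s)) exp (-U) / C \<le> m\<^sub>t \<le> C exp (-U) + \<rho>\<^sub>0\<close>, so \<open>log (m\<^sub>t / exp (-U))\<close> is
  trapped between a constant and \<open>log (C + \<rho>\<^sub>0 / exp (-U))\<close>. An elementary estimate then bounds the
  absolute value of the product by a combination of \<open>exp (-U)\<close>, \<open>\<rho>\<^sub>0\<close> and
  \<open>\<rho>\<^sub>0 log (\<rho>\<^sub>0 / exp (-U))\<close>, all integrable, the last one because \<open>H(m\<^sub>0|g) < \<infinity>\<close>.
  The time integral in the Duhamel formula is a Lebesgue integral, so it also needs
  \<open>u \<mapsto> \<Phi>(m\<^sub>u)(x)\<close> to be continuous; this follows from the Lipschitz dependence of \<open>dF\<close> on \<open>m\<close>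
  in \<open>W\<^sub>p\<close> and the \<open>W\<^sub>p\<close>-continuity of the flow.\<close>

lemma powr_add_le:
  fixes a b p :: real
  assumes "a \<ge> 0" "b \<ge> 0" "p > 0"
  shows "(a + b) powr p \<le> 2 powr p * (a powr p + b powr p)"
proof -
  have "(a + b) powr p \<le> (2 * max a b) powr p"
    using assms by (intro powr_mono2) auto
  also have "\<dots> = 2 powr p * max a b powr p"
    using assms by (simp add: powr_mult)
  also have "max a b powr p \<le> a powr p + b powr p"
    by (cases "a \<le> b") (auto simp: max_def)
  finally show ?thesis
    by simp
qed

lemma pair_measure_in_couplings:
  fixes \<mu> \<nu> :: "'a::euclidean_space measure"
  assumes \<mu>: "\<mu> \<in> probs" and \<nu>: "\<nu> \<in> probs"
  shows "\<mu> \<Otimes>\<^sub>M \<nu> \<in> couplings \<mu> \<nu>"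
proof -
  have pm: "prob_space \<mu>" "sets \<mu> = sets borel" and pn: "prob_space \<nu>" "sets \<nu> = sets borel"
    using assms unfolding probs_def by auto
  interpret P: pair_prob_space \<mu> \<nu>
    using pm pn by (simp add: pair_prob_space_def pair_sigma_finite_def prob_space_imp_sigma_finite)
  have sets_pair: "sets (\<mu> \<Otimes>\<^sub>M \<nu>) = sets (borel \<Otimes>\<^sub>M borel)"
    using pm pn by (intro sets_pair_measure_cong) auto
  have "distr (\<mu> \<Otimes>\<^sub>M \<nu>) borel fst = distr (\<mu> \<Otimes>\<^sub>M \<nu>) \<mu> fst"
    using pm by (intro distr_cong) auto
  also have "\<dots> = \<mu>"
    using pn by (intro prob_space.distr_pair_fst) auto
  finally have fst_marginal: "distr (\<mu> \<Otimes>\<^sub>M \<nu>) borel fst = \<mu>" .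
  have snd_marginal: "distr (\<mu> \<Otimes>\<^sub>M \<nu>) borel snd = \<nu>"
  proof (rule measure_eqI)
    fix A assume "A \<in> sets (distr (\<mu> \<Otimes>\<^sub>M \<nu>) borel snd)"
    then have A: "A \<in> sets \<nu>"
      using pn by simp
    have "snd -` A \<inter> space (\<mu> \<Otimes>\<^sub>M \<nu>) = space \<mu> \<times> A"
      using sets_eq_imp_space_eq[OF pn(2)] A sets.sets_into_space by (fastforce simp: space_pair_measure)
    moreover have "snd \<in> measurable (\<mu> \<Otimes>\<^sub>M \<nu>) borel"
      by (subst measurable_cong_sets[OF sets_pair refl]) simp
    ultimately have "emeasure (distr (\<mu> \<Otimes>\<^sub>M \<nu>) borel snd) A = emeasure (\<mu> \<Otimes>\<^sub>M \<nu>) (space \<mu> \<times> A)"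
      using A pn by (simp add: emeasure_distr)
    also have "\<dots> = emeasure \<nu> A"
      using A by (subst P.M2.emeasure_pair_measure_Times) (auto simp: prob_space.emeasure_space_1[OF pm(1)])
    finally show "emeasure (distr (\<mu> \<Otimes>\<^sub>M \<nu>) borel snd) A = emeasure \<nu> A" .
  qed (use pn in simp)
  show ?thesis
    unfolding couplings_def using sets_pair fst_marginal snd_marginal P.prob_space_axioms by auto
qed

lemma wass_cost_finite:
  fixes \<mu> \<nu> :: "'a::euclidean_space measure"
  assumes \<mu>: "\<mu> \<in> probs_q p" and \<nu>: "\<nu> \<in> probs_q p" and "p > 0"
  shows "wass_cost p \<mu> \<nu> < \<infinity>"
proof -
  let ?\<pi> = "\<mu> \<Otimes>\<^sub>M \<nu>"
  have "?\<pi> \<in> couplings \<mu> \<nu>"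
    using assms by (intro pair_measure_in_couplings) (auto simp: probs_q_def)
  then have sets_pair: "sets ?\<pi> = sets (borel \<Otimes>\<^sub>M borel)"
    and marginals: "distr ?\<pi> borel fst = \<mu>" "distr ?\<pi> borel snd = \<nu>"
    unfolding couplings_def by auto
  have "wass_cost p \<mu> \<nu> \<le> (\<integral>\<^sup>+ z. ennreal (dist (fst z) (snd z) powr p) \<partial>?\<pi>)"
    unfolding wass_cost_def using \<open>?\<pi> \<in> couplings \<mu> \<nu>\<close> by (rule INF_lower)
  also have "\<dots> \<le> (\<integral>\<^sup>+ z. ennreal (2 powr p) * ennreal (norm (fst z) powr p)
                       + ennreal (2 powr p) * ennreal (norm (snd z) powr p) \<partial>?\<pi>)"
  proof (rule nn_integral_mono)
    fix z :: "'a \<times> 'a"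
    have "dist (fst z) (snd z) powr p \<le> (norm (fst z) + norm (snd z)) powr p"
      using \<open>p > 0\<close> by (intro powr_mono2) (auto simp: dist_norm norm_triangle_ineq4)
    also have "\<dots> \<le> 2 powr p * (norm (fst z) powr p + norm (snd z) powr p)"
      using \<open>p > 0\<close> by (intro powr_add_le) auto
    finally show "ennreal (dist (fst z) (snd z) powr p)
        \<le> ennreal (2 powr p) * ennreal (norm (fst z) powr p) + ennreal (2 powr p) * ennreal (norm (snd z) powr p)"
      by (simp add: ennreal_mult[symmetric] ennreal_plus[symmetric] distrib_left del: ennreal_plus)
  qed
  also have "\<dots> = ennreal (2 powr p) * (\<integral>\<^sup>+ z. ennreal (norm (fst z) powr p) \<partial>?\<pi>)
                 + ennreal (2 powr p) * (\<integral>\<^sup>+ z. ennreal (norm (snd z) powr p) \<partial>?\<pi>)"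
    by (subst nn_integral_add) (auto simp: nn_integral_cmult measurable_cong_sets[OF sets_pair refl])
  also have "(\<integral>\<^sup>+ z. ennreal (norm (fst z) powr p) \<partial>?\<pi>) = (\<integral>\<^sup>+ x. ennreal (norm x powr p) \<partial>\<mu>)"
    by (subst marginals(1)[symmetric], subst nn_integral_distr)
       (auto simp: measurable_cong_sets[OF sets_pair refl])
  also have "(\<integral>\<^sup>+ z. ennreal (norm (snd z) powr p) \<partial>?\<pi>) = (\<integral>\<^sup>+ x. ennreal (norm x powr p) \<partial>\<nu>)"
    by (subst marginals(2)[symmetric], subst nn_integral_distr)
       (auto simp: measurable_cong_sets[OF sets_pair refl])
  also have "ennreal (2 powr p) * (\<integral>\<^sup>+ x. ennreal (norm x powr p) \<partial>\<mu>)
      + ennreal (2 powr p) * (\<integral>\<^sup>+ x. ennreal (norm x powr p) \<partial>\<nu>) < \<infinity>"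
    using \<mu> \<nu> by (simp add: probs_q_def ennreal_mult_less_top)
  finally show ?thesis .
qed

lemma standing_F_continuous:
  fixes dF :: "'a::euclidean_space measure \<Rightarrow> 'a \<Rightarrow> real"
  assumes "standing_F p F dF" "\<mu> \<in> probs"
  shows "continuous_on UNIV (dF \<mu>)"
proof (intro continuous_at_imp_continuous_on ballI continuous_at_sequentiallyI)
  have sequential: "\<And>Ms m xs x. (\<forall>n. Ms n \<in> probs) \<and> m \<in> probs \<and> weak_conv_seq Ms m \<and> xs \<longlonglongrightarrow> x
      \<Longrightarrow> (\<lambda>n. dF (Ms n) (xs n)) \<longlonglongrightarrow> dF m x"
    using assms(1) unfolding standing_F_def by blast
  fix x and xs :: "nat \<Rightarrow> 'a"
  assume "xs \<longlonglongrightarrow> x"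
  moreover have "weak_conv_seq (\<lambda>n. \<mu>) \<mu>"
    unfolding weak_conv_seq_def by simp
  ultimately show "(\<lambda>n. dF \<mu> (xs n)) \<longlonglongrightarrow> dF \<mu> x"
    using sequential[of "\<lambda>n. \<mu>" \<mu> xs x] assms(2) by simp
qed

lemma standing_UD:
  assumes "standing_U p U"
  shows "U \<in> borel_measurable borel" "integrable lborel (\<lambda>x. exp (- U x))"
    "(\<integral>x. exp (- U x) \<partial>lborel) = 1"
proof -
  have U: "U \<in> borel_measurable lborel" and normalized: "(\<integral>\<^sup>+ x. ennreal (exp (- U x)) \<partial>lborel) = 1"
    using assms unfolding standing_U_def by auto
  then show "U \<in> borel_measurable borel"
    by simp
  have "(\<lambda>x. exp (- U x)) \<in> borel_measurable lborel"
    using U by measurable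
  then show "integrable lborel (\<lambda>x. exp (- U x))" "(\<integral>x. exp (- U x) \<partial>lborel) = 1"
    using normalized by (auto intro: integrableI_nonneg simp: integral_eq_nn_integral)
qed

lemma exp_diff_bounds:
  fixes a b B :: real
  assumes "\<bar>a - b\<bar> \<le> B"
  shows "exp (- B) * exp b \<le> exp a" "exp a \<le> exp B * exp b"
  using assms by (simp_all add: exp_add[symmetric])

lemma integrable_gibbs_weight:
  fixes D :: "'a::euclidean_space \<Rightarrow> real"
  assumes U: "standing_U p U" and "D \<in> borel_measurable borel" and "\<And>y. \<bar>D y\<bar> \<le> M"
  shows "integrable lborel (\<lambda>y. exp (c * D y - U y))"
proof (rule Bochner_Integration.integrable_bound)
  show "integrable lborel (\<lambda>y. exp (\<bar>c\<bar> * M) * exp (- U y))"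
    using standing_UD[OF U] by simp
  show "(\<lambda>y. exp (c * D y - U y)) \<in> borel_measurable lborel"
    using assms standing_UD[OF U] by simp
  have "\<bar>(c * D y - U y) - (- U y)\<bar> \<le> \<bar>c\<bar> * M" for y
    using assms(3) by (simp add: abs_mult mult_left_mono)
  then show "AE y in lborel. norm (exp (c * D y - U y)) \<le> norm (exp (\<bar>c\<bar> * M) * exp (- U y))"
    using exp_diff_bounds(2) by auto
qed

lemma gibbs_partition_perturbation:
  fixes D\<^sub>1 D\<^sub>2 :: "'a::euclidean_space \<Rightarrow> real" and c :: real
  assumes U: "standing_U p U"
    and D\<^sub>1: "D\<^sub>1 \<in> borel_measurable borel" "\<And>y. \<bar>D\<^sub>1 y\<bar> \<le> M"
    and D\<^sub>2: "D\<^sub>2 \<in> borel_measurable borel" "\<And>y. \<bar>D\<^sub>2 y\<bar> \<le> M"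
    and close: "\<And>y. \<bar>D\<^sub>2 y - D\<^sub>1 y\<bar> \<le> \<delta>"
  defines "Z \<equiv> \<lambda>D. \<integral>y. exp (c * D y - U y) \<partial>lborel"
  shows "exp (- \<bar>c\<bar> * \<delta>) * Z D\<^sub>1 \<le> Z D\<^sub>2" "Z D\<^sub>2 \<le> exp (\<bar>c\<bar> * \<delta>) * Z D\<^sub>1"
proof -
  have pointwise: "exp (- (\<bar>c\<bar> * \<delta>)) * exp (c * D\<^sub>1 y - U y) \<le> exp (c * D\<^sub>2 y - U y)"
    "exp (c * D\<^sub>2 y - U y) \<le> exp (\<bar>c\<bar> * \<delta>) * exp (c * D\<^sub>1 y - U y)" for y
  proof -
    have "\<bar>(c * D\<^sub>2 y - U y) - (c * D\<^sub>1 y - U y)\<bar> \<le> \<bar>c\<bar> * \<delta>"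
      using close[of y] by (simp add: abs_mult mult_left_mono right_diff_distrib[symmetric])
    then show "exp (- (\<bar>c\<bar> * \<delta>)) * exp (c * D\<^sub>1 y - U y) \<le> exp (c * D\<^sub>2 y - U y)"
      "exp (c * D\<^sub>2 y - U y) \<le> exp (\<bar>c\<bar> * \<delta>) * exp (c * D\<^sub>1 y - U y)"
      by (rule exp_diff_bounds)+
  qed
  note integrable = integrable_gibbs_weight[OF U D\<^sub>1] integrable_gibbs_weight[OF U D\<^sub>2]
  have "exp (- \<bar>c\<bar> * \<delta>) * Z D\<^sub>1 = (\<integral>y. exp (- (\<bar>c\<bar> * \<delta>)) * exp (c * D\<^sub>1 y - U y) \<partial>lborel)"
    unfolding Z_def by simp
  also have "\<dots> \<le> Z D\<^sub>2"
    unfolding Z_def using pointwise(1) by (intro integral_mono integrable integrable_mult_right)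
  finally show "exp (- \<bar>c\<bar> * \<delta>) * Z D\<^sub>1 \<le> Z D\<^sub>2" .
  have "Z D\<^sub>2 \<le> (\<integral>y. exp (\<bar>c\<bar> * \<delta>) * exp (c * D\<^sub>1 y - U y) \<partial>lborel)"
    unfolding Z_def using pointwise(2) by (intro integral_mono integrable integrable_mult_right)
  also have "\<dots> = exp (\<bar>c\<bar> * \<delta>) * Z D\<^sub>1"
    unfolding Z_def by simp
  finally show "Z D\<^sub>2 \<le> exp (\<bar>c\<bar> * \<delta>) * Z D\<^sub>1" .
qed

lemma gibbs_partition_bounds:
  fixes D :: "'a::euclidean_space \<Rightarrow> real" and c :: real
  assumes U: "standing_U p U" and D: "D \<in> borel_measurable borel" "\<And>y. \<bar>D y\<bar> \<le> M"
  shows "exp (- \<bar>c\<bar> * M) \<le> (\<integral>y. exp (c * D y - U y) \<partial>lborel)"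
    "(\<integral>y. exp (c * D y - U y) \<partial>lborel) \<le> exp (\<bar>c\<bar> * M)"
proof -
  have "M \<ge> 0"
    using D(2) abs_ge_zero order_trans by blast
  then have zero: "(\<lambda>y. 0) \<in> borel_measurable borel" "\<And>y. \<bar>0\<bar> \<le> M"
    by auto
  note perturbation = gibbs_partition_perturbation[OF U zero D, of M c]
  show "exp (- \<bar>c\<bar> * M) \<le> (\<integral>y. exp (c * D y - U y) \<partial>lborel)"
    "(\<integral>y. exp (c * D y - U y) \<partial>lborel) \<le> exp (\<bar>c\<bar> * M)"
    using perturbation D(2) standing_UD(3)[OF U] by auto
qed

lemma gibbs_density_bounds:
  fixes D :: "'a::euclidean_space \<Rightarrow> real" and c :: real
  assumes U: "standing_U p U" and D: "D \<in> borel_measurable borel" "\<And>y. \<bar>D y\<bar> \<le> M"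
  defines "K \<equiv> \<bar>c\<bar> * M"
  shows "exp (- U x) / exp (2 * K) \<le> exp (c * D x - U x) / (\<integral>y. exp (c * D y - U y) \<partial>lborel)"
    "exp (c * D x - U x) / (\<integral>y. exp (c * D y - U y) \<partial>lborel) \<le> exp (2 * K) * exp (- U x)"
proof -
  let ?Z = "\<integral>y. exp (c * D y - U y) \<partial>lborel"
  have Z: "exp (- K) \<le> ?Z" "?Z \<le> exp K"
    using gibbs_partition_bounds[OF U D, of c] unfolding K_def by auto
  have "\<bar>(c * D x - U x) - (- U x)\<bar> \<le> K"
    unfolding K_def using D(2) by (simp add: abs_mult mult_left_mono)
  note numerator = exp_diff_bounds[OF this]
  have exp_double: "exp (2 * K) = exp K * exp K"
    by (metis mult_2 exp_add)
  have "exp (- U x) / exp (2 * K) = exp (- K) * exp (- U x) / exp K"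
    unfolding exp_double by (simp add: exp_minus field_simps)
  also have "\<dots> \<le> exp (c * D x - U x) / ?Z"
    using numerator(1) Z(2) Z(1) by (intro frac_le) (auto intro: less_le_trans[OF exp_gt_zero])
  finally show "exp (- U x) / exp (2 * K) \<le> exp (c * D x - U x) / ?Z" .
  have "exp (c * D x - U x) / ?Z \<le> exp K * exp (- U x) / exp (- K)"
    using numerator(2) Z(1) by (intro frac_le) auto
  also have "\<dots> = exp (2 * K) * exp (- U x)"
    unfolding exp_double by (simp add: exp_minus field_simps)
  finally show "exp (c * D x - U x) / ?Z \<le> exp (2 * K) * exp (- U x)" .
qed

lemma continuous_on_gibbs_density:
  fixes D :: "real \<Rightarrow> 'a::euclidean_space \<Rightarrow> real" and W :: "real \<Rightarrow> real \<Rightarrow> real"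
  assumes U: "standing_U p U"
    and D: "\<And>u. u \<in> T \<Longrightarrow> D u \<in> borel_measurable borel" "\<And>u y. u \<in> T \<Longrightarrow> \<bar>D u y\<bar> \<le> M"
    and close: "\<And>u v y. u \<in> T \<Longrightarrow> v \<in> T \<Longrightarrow> \<bar>D v y - D u y\<bar> \<le> W v u"
    and W: "\<And>u. u \<in> T \<Longrightarrow> ((\<lambda>v. W v u) \<longlongrightarrow> 0) (at u within T)"
  shows "continuous_on T (\<lambda>u. exp (c * D u x - U x) / (\<integral>y. exp (c * D u y - U y) \<partial>lborel))"
  unfolding continuous_on_def
proof
  fix u assume u: "u \<in> T"
  let ?F = "at u within T"
  let ?Z = "\<lambda>v. \<integral>y. exp (c * D v y - U y) \<partial>lborel"
  have in_T: "eventually (\<lambda>v. v \<in> T) ?F"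
    by (simp add: eventually_at_filter)
  have "((\<lambda>v. D v x) \<longlongrightarrow> D u x) ?F"
  proof (rule LIM_zero_cancel, rule Lim_null_comparison[OF _ W[OF u]])
    show "eventually (\<lambda>v. norm (D v x - D u x) \<le> W v u) ?F"
      using in_T by eventually_elim (use close[OF u] in auto)
  qed
  moreover have "(?Z \<longlongrightarrow> ?Z u) ?F"
  proof (rule tendsto_sandwich)
    note perturbation = gibbs_partition_perturbation[OF U D[OF u] D, of _ _ c]
    show "eventually (\<lambda>v. exp (- \<bar>c\<bar> * W v u) * ?Z u \<le> ?Z v) ?F"
      "eventually (\<lambda>v. ?Z v \<le> exp (\<bar>c\<bar> * W v u) * ?Z u) ?F"
      using in_T by (eventually_elim, use perturbation close[OF u] in auto)+
    show "((\<lambda>v. exp (- \<bar>c\<bar> * W v u) * ?Z u) \<longlongrightarrow> ?Z u) ?F"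
      "((\<lambda>v. exp (\<bar>c\<bar> * W v u) * ?Z u) \<longlongrightarrow> ?Z u) ?F"
      using W[OF u] by (auto intro!: tendsto_eq_intros)
  qed
  moreover have "?Z u > 0"
    using gibbs_partition_bounds(1)[OF U D[OF u], of c] by (meson exp_gt_zero less_le_trans)
  ultimately show "((\<lambda>u. exp (c * D u x - U x) / ?Z u) \<longlongrightarrow> exp (c * D u x - U x) / ?Z u) ?F"
    by (intro tendsto_intros) auto
qed

lemma duhamel_kernel_integral:
  fixes \<alpha> t C :: real
  assumes "t \<ge> 0"
  shows "(LINT u:{0..t}|lborel. \<alpha> * exp (- \<alpha> * (t - u)) * C) = C * (1 - exp (- \<alpha> * t))"
proof -
  have "(LINT u:{0..t}|lborel. \<alpha> * exp (- \<alpha> * (t - u)) * C)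
      = C * exp (- \<alpha> * (t - t)) - C * exp (- \<alpha> * (t - 0))"
    unfolding set_lebesgue_integral_def
  proof (rule integral_FTC_atLeastAtMost[OF assms])
    fix x
    have "((\<lambda>u. C * exp (- \<alpha> * (t - u))) has_real_derivative (\<alpha> * exp (- \<alpha> * (t - x)) * C))
        (at x within {0..t})"
      by (auto intro!: derivative_eq_intros)
    then show "((\<lambda>u. C * exp (- \<alpha> * (t - u))) has_vector_derivative (\<alpha> * exp (- \<alpha> * (t - x)) * C))
        (at x within {0..t})"
      by (simp add: has_real_derivative_iff_has_vector_derivative)
  qed (intro continuous_intros)
  then show ?thesis
    by (simp add: algebra_simps)
qed

lemma duhamel_integral_bounds:
  fixes h :: "real \<Rightarrow> real" and \<alpha> t lo hi :: real
  assumes "\<alpha> > 0" "t \<ge> 0" "continuous_on {0..t} h"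
    and bounds: "\<And>u. u \<in> {0..t} \<Longrightarrow> lo \<le> h u \<and> h u \<le> hi"
  shows "lo * (1 - exp (- \<alpha> * t)) \<le> (LINT u:{0..t}|lborel. \<alpha> * exp (- \<alpha> * (t - u)) * h u)"
    "(LINT u:{0..t}|lborel. \<alpha> * exp (- \<alpha> * (t - u)) * h u) \<le> hi * (1 - exp (- \<alpha> * t))"
proof -
  have integrable: "set_integrable lborel {0..t} (\<lambda>u. \<alpha> * exp (- \<alpha> * (t - u)) * h u)"
    by (intro borel_integrable_atLeastAtMost' continuous_intros assms(3))
  have integrable_const: "set_integrable lborel {0..t} (\<lambda>u. \<alpha> * exp (- \<alpha> * (t - u)) * C)" for C
    by (intro borel_integrable_atLeastAtMost' continuous_intros)
  have "lo * (1 - exp (- \<alpha> * t)) = (LINT u:{0..t}|lborel. \<alpha> * exp (- \<alpha> * (t - u)) * lo)"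
    by (rule duhamel_kernel_integral[OF assms(2), symmetric])
  also have "\<dots> \<le> (LINT u:{0..t}|lborel. \<alpha> * exp (- \<alpha> * (t - u)) * h u)"
    using assms(1) bounds by (intro set_integral_mono integrable_const integrable mult_left_mono) auto
  finally show "lo * (1 - exp (- \<alpha> * t)) \<le> (LINT u:{0..t}|lborel. \<alpha> * exp (- \<alpha> * (t - u)) * h u)" .
  have "(LINT u:{0..t}|lborel. \<alpha> * exp (- \<alpha> * (t - u)) * h u)
      \<le> (LINT u:{0..t}|lborel. \<alpha> * exp (- \<alpha> * (t - u)) * hi)"
    using assms(1) bounds by (intro set_integral_mono integrable_const integrable mult_left_mono) auto
  also have "\<dots> = hi * (1 - exp (- \<alpha> * t))"
    by (rule duhamel_kernel_integral[OF assms(2)])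
  finally show "(LINT u:{0..t}|lborel. \<alpha> * exp (- \<alpha> * (t - u)) * h u) \<le> hi * (1 - exp (- \<alpha> * t))" .
qed

lemma ln_add_le:
  fixes c q :: real
  assumes "c \<ge> 1" "q \<ge> 0"
  shows "ln (c + q) \<le> ln (c + 1) + \<bar>ln q\<bar>"
proof (cases "q \<le> 1")
  case True
  then have "ln (c + q) \<le> ln (c + 1)"
    using assms by simp
  then show ?thesis
    by simp
next
  case False
  then have "c + q \<le> (c + 1) * q"
    using assms by (simp add: algebra_simps)
  then have "ln (c + q) \<le> ln ((c + 1) * q)"
    using assms by simp
  also have "\<dots> = ln (c + 1) + ln q"
    using False assms by (simp add: ln_mult_pos)
  finally show ?thesis
    by simp
qed

lemma abs_ln_le:
  fixes a r B :: real
  assumes "0 < a" "a \<le> r" "r \<le> B" "1 \<le> B"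
  shows "\<bar>ln r\<bar> \<le> \<bar>ln a\<bar> + ln B"
proof -
  have "ln a \<le> ln r" "ln r \<le> ln B" "0 \<le> ln B"
    using assms by auto
  then show ?thesis
    by linarith
qed

lemma abs_ln_ratio_mult_diff_le:
  fixes E \<rho> c a h m :: real
  assumes E: "E > 0" and \<rho>: "\<rho> \<ge> 0" and c: "c \<ge> 1" and a: "a > 0"
    and h: "0 \<le> h" "h \<le> c * E" and m: "a * E \<le> m" "m \<le> c * E + \<rho>"
  shows "\<bar>ln (m / E) * (h - m)\<bar>
    \<le> \<bar>ln a\<bar> * (2 * c * E + \<rho>) + 2 * c * (c * E + \<rho>) + \<rho> * ln (c + 1) + \<bar>\<rho> * ln (\<rho> / E)\<bar>"
proof -
  define B where "B = c + \<rho> / E"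
  have B: "1 \<le> B"
    using c \<rho> E unfolding B_def by (simp add: add_increasing2)
  have "a \<le> m / E" "m / E \<le> B"
    using m E by (auto simp: B_def field_simps)
  then have ln_ratio: "\<bar>ln (m / E)\<bar> \<le> \<bar>ln a\<bar> + ln B"
    using a B by (intro abs_ln_le) auto
  have "0 < m"
    using m(1) mult_pos_pos[OF a E] by linarith
  then have diff: "\<bar>h - m\<bar> \<le> 2 * c * E + \<rho>"
    using h m(2) by linarith
  have "ln B \<le> B"
    using B by (intro ln_bound) simp
  then have E_ln_B: "E * ln B \<le> c * E + \<rho>"
    using E by (simp add: B_def field_simps mult_left_mono)
  have "\<rho> * ln B \<le> \<rho> * (ln (c + 1) + \<bar>ln (\<rho> / E)\<bar>)"
    unfolding B_def using c \<rho> E by (intro mult_left_mono ln_add_le) auto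
  then have \<rho>_ln_B: "\<rho> * ln B \<le> \<rho> * ln (c + 1) + \<bar>\<rho> * ln (\<rho> / E)\<bar>"
    using \<rho> by (simp add: abs_mult distrib_left)
  have "\<bar>ln (m / E) * (h - m)\<bar> \<le> (\<bar>ln a\<bar> + ln B) * (2 * c * E + \<rho>)"
    unfolding abs_mult using ln_ratio diff by (intro mult_mono) auto
  also have "\<dots> = \<bar>ln a\<bar> * (2 * c * E + \<rho>) + 2 * c * (E * ln B) + \<rho> * ln B"
    by (simp add: algebra_simps)
  also have "\<dots> \<le> \<bar>ln a\<bar> * (2 * c * E + \<rho>) + 2 * c * (c * E + \<rho>) + \<rho> * ln (c + 1) + \<bar>\<rho> * ln (\<rho> / E)\<bar>"
    using mult_left_mono[OF E_ln_B, of "2 * c"] \<rho>_ln_B c by linarith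
  finally show ?thesis .
qed

lemma integrable_prob_density:
  fixes \<rho> :: "'a::euclidean_space \<Rightarrow> real"
  assumes "\<rho> \<in> borel_measurable lborel" "\<And>x. \<rho> x \<ge> 0"
    and "prob_space (density lborel (\<lambda>x. ennreal (\<rho> x)))"
  shows "integrable lborel \<rho>"
proof (rule integrableI_nonneg)
  have "emeasure (density lborel (\<lambda>x. ennreal (\<rho> x))) UNIV = 1"
    using prob_space.emeasure_space_1[OF assms(3)] by simp
  then show "(\<integral>\<^sup>+ x. ennreal (\<rho> x) \<partial>lborel) < \<infinity>"
    using assms(1) by (simp add: emeasure_density)
qed (use assms in auto)

lemma RN_deriv_gmeas_density:
  fixes U \<rho> :: "'a::euclidean_space \<Rightarrow> real"
  assumes U: "standing_U p U" and \<rho>: "\<rho> \<in> borel_measurable lborel" "\<And>x. \<rho> x \<ge> 0"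
  shows "AE x in lborel. RN_deriv (gmeas U) (density lborel (\<lambda>x. ennreal (\<rho> x))) x
    = ennreal (\<rho> x / exp (- U x))"
proof -
  let ?g = "gmeas U"
  have U_meas: "U \<in> borel_measurable lborel"
    using standing_UD(1)[OF U] by simp
  have "(\<integral>\<^sup>+ x. ennreal (exp (- U x)) \<partial>lborel) = 1"
    using U unfolding standing_U_def by simp
  then have "prob_space ?g"
    using U_meas by (intro prob_spaceI) (simp add: gmeas_def emeasure_density)
  then interpret sigma_finite_measure ?g
    by (rule prob_space_imp_sigma_finite)
  have "density ?g (\<lambda>x. ennreal (\<rho> x / exp (- U x)))
      = density lborel (\<lambda>x. ennreal (exp (- U x)) * ennreal (\<rho> x / exp (- U x)))"
    unfolding gmeas_def using \<rho> U_meas by (intro density_density_eq) auto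
  also have "\<dots> = density lborel (\<lambda>x. ennreal (\<rho> x))"
  proof (rule density_cong)
    show "AE x in lborel. ennreal (exp (- U x)) * ennreal (\<rho> x / exp (- U x)) = ennreal (\<rho> x)"
      using \<rho>(2) by (auto simp: ennreal_mult[symmetric])
  qed (use \<rho> U_meas in simp_all)
  finally have density_eq: "density ?g (\<lambda>x. ennreal (\<rho> x / exp (- U x))) = density lborel (\<lambda>x. ennreal (\<rho> x))" .
  have "(\<lambda>x. ennreal (\<rho> x / exp (- U x))) \<in> borel_measurable ?g"
    using \<rho> U_meas by (simp add: gmeas_def)
  from RN_deriv_unique[OF this density_eq]
  have "AE x in ?g. ennreal (\<rho> x / exp (- U x)) = RN_deriv ?g (density lborel (\<lambda>x. ennreal (\<rho> x))) x" .
  then show ?thesis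
    using U_meas unfolding gmeas_def by (simp add: AE_density eq_commute)
qed

lemma finite_rel_entropy_integrable:
  fixes U \<rho> :: "'a::euclidean_space \<Rightarrow> real"
  assumes U: "standing_U p U" and \<rho>: "\<rho> \<in> borel_measurable lborel" "\<And>x. \<rho> x \<ge> 0"
    and entropy: "finite_rel_entropy (density lborel (\<lambda>x. ennreal (\<rho> x))) (gmeas U)"
  shows "integrable lborel (\<lambda>x. \<rho> x * ln (\<rho> x / exp (- U x)))"
proof -
  let ?m = "density lborel (\<lambda>x. ennreal (\<rho> x))"
  have U_meas: "U \<in> borel_measurable lborel"
    using standing_UD(1)[OF U] by simp
  have "AE x in lborel. 0 < ennreal (\<rho> x) \<longrightarrow>
      ln (enn2real (RN_deriv (gmeas U) ?m x)) = ln (\<rho> x / exp (- U x))"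
    using RN_deriv_gmeas_density[OF U \<rho>] by eventually_elim (use \<rho>(2) in auto)
  then have "AE x in ?m. ln (enn2real (RN_deriv (gmeas U) ?m x)) = ln (\<rho> x / exp (- U x))"
    using \<rho>(1) by (simp add: AE_density)
  moreover have "integrable ?m (\<lambda>x. ln (enn2real (RN_deriv (gmeas U) ?m x)))"
    using entropy unfolding finite_rel_entropy_def by simp
  ultimately have "integrable ?m (\<lambda>x. ln (\<rho> x / exp (- U x)))"
    by (rule integrable_cong_AE_imp[rotated 2]) (use \<rho>(1) U_meas in simp)
  then have "integrable lborel (\<lambda>x. \<rho> x *\<^sub>R ln (\<rho> x / exp (- U x)))"
    using \<rho> U_meas by (subst integrable_density[symmetric]) auto
  then show ?thesis
    by simp
qed

lemma efp_solution_Phi_dens_bounds: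
  assumes F: "standing_F p F dF" and U: "standing_U p U"
    and m: "efp_solution p \<sigma> \<alpha> dF U m"
  obtains C where "C \<ge> 1"
    and "\<And>u x. u \<ge> 0 \<Longrightarrow> exp (- U x) / C \<le> Phi_dens \<sigma> dF U (m u) x"
    and "\<And>u x. u \<ge> 0 \<Longrightarrow> Phi_dens \<sigma> dF U (m u) x \<le> C * exp (- U x)"
proof -
  obtain M where M: "M > 0" "\<forall>\<mu>\<in>probs. \<forall>x. \<bar>dF \<mu> x\<bar> \<le> M"
    using F unfolding standing_F_def by blast
  have m_probs: "m u \<in> probs" if "u \<ge> 0" for u
    using m that unfolding efp_solution_def probs_q_def by blast
  define C where "C = exp (2 * (\<bar>- 2 / \<sigma>\<^sup>2\<bar> * M))"
  have "dF (m u) \<in> borel_measurable borel" if "u \<ge> 0" for u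
    using standing_F_continuous[OF F m_probs[OF that]] by (rule borel_measurable_continuous_onI)
  then have "exp (- U x) / C \<le> Phi_dens \<sigma> dF U (m u) x \<and> Phi_dens \<sigma> dF U (m u) x \<le> C * exp (- U x)"
    if "u \<ge> 0" for u x
    using gibbs_density_bounds[OF U, where D = "dF (m u)" and M = M and c = "- 2 / \<sigma>\<^sup>2" and x = x] M m_probs that
    unfolding Phi_dens_def C_def by simp
  moreover have "C \<ge> 1"
    unfolding C_def using M by simp
  ultimately show thesis
    using that by blast
qed

lemma efp_solution_Phi_dens_continuous:
  assumes "p > 0" and F: "standing_F p F dF" and U: "standing_U p U"
    and m: "efp_solution p \<sigma> \<alpha> dF U m"
  shows "continuous_on {0..} (\<lambda>u. Phi_dens \<sigma> dF U (m u) x)"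
proof -
  obtain L M where L: "L > 0"
    and Lip: "\<forall>\<mu>\<in>probs. \<forall>\<nu>\<in>probs. \<forall>x x'. wass_cost p \<mu> \<nu> < \<infinity> \<longrightarrow>
      \<bar>dF \<mu> x - dF \<nu> x'\<bar> \<le> L * (Wp p \<mu> \<nu> + dist x x')"
    and M: "\<forall>\<mu>\<in>probs. \<forall>x. \<bar>dF \<mu> x\<bar> \<le> M"
    using F unfolding standing_F_def by blast
  have m_probs_q: "\<And>u. u \<ge> 0 \<Longrightarrow> m u \<in> probs_q p"
    and W_cont: "\<And>u \<epsilon>. u \<ge> 0 \<Longrightarrow> \<epsilon> > 0 \<Longrightarrow> \<exists>\<delta>>0. \<forall>v\<ge>0. \<bar>v - u\<bar> < \<delta> \<longrightarrow> Wp p (m v) (m u) < \<epsilon>"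
    using m unfolding efp_solution_def by blast+
  then have m_probs: "\<And>u. u \<ge> 0 \<Longrightarrow> m u \<in> probs"
    unfolding probs_q_def by blast
  have "\<bar>dF (m v) y - dF (m u) y\<bar> \<le> L * Wp p (m v) (m u)" if "u \<in> {0..}" "v \<in> {0..}" for u v y
    using Lip m_probs wass_cost_finite[OF m_probs_q m_probs_q \<open>p > 0\<close>] that
    by (metis atLeast_iff dist_self add_0_right)
  moreover have "((\<lambda>v. L * Wp p (m v) (m u)) \<longlongrightarrow> 0) (at u within {0..})" if u: "u \<in> {0..}" for u
  proof -
    have "((\<lambda>v. Wp p (m v) (m u)) \<longlongrightarrow> 0) (at u within {0..})"
    proof (rule tendstoI)
      fix \<epsilon> :: real assume "\<epsilon> > 0"
      then obtain \<delta> where "\<delta> > 0" "\<forall>v\<ge>0. \<bar>v - u\<bar> < \<delta> \<longrightarrow> Wp p (m v) (m u) < \<epsilon>"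
        using W_cont[of u \<epsilon>] u by auto
      then show "eventually (\<lambda>v. dist (Wp p (m v) (m u)) 0 < \<epsilon>) (at u within {0..})"
        unfolding eventually_at by (intro exI[of _ \<delta>]) (auto simp: Wp_def dist_real_def)
    qed
    then show ?thesis
      using tendsto_mult_right_zero by blast
  qed
  ultimately show ?thesis
    unfolding Phi_dens_def using M m_probs standing_F_continuous[OF F]
    by (intro continuous_on_gibbs_density[OF U, of _ _ M]) (auto intro: borel_measurable_continuous_onI)
qed

lemma efp_dens_bounds:
  assumes "\<alpha> > 0" "0 < s" "s \<le> t" "\<rho> x \<ge> 0" "C > 0"
    and cont: "continuous_on {0..} (\<lambda>u. Phi_dens \<sigma> dF U (m u) x)"
    and lower: "\<And>u. u \<ge> 0 \<Longrightarrow> exp (- U x) / C \<le> Phi_dens \<sigma> dF U (m u) x"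
    and upper: "\<And>u. u \<ge> 0 \<Longrightarrow> Phi_dens \<sigma> dF U (m u) x \<le> C * exp (- U x)"
  shows "(1 - exp (- \<alpha> * s)) / C * exp (- U x) \<le> efp_dens \<sigma> \<alpha> dF U m \<rho> t x"
    "efp_dens \<sigma> \<alpha> dF U m \<rho> t x \<le> C * exp (- U x) + \<rho> x"
proof -
  let ?I = "LINT u:{0..t}|lborel. \<alpha> * exp (- \<alpha> * (t - u)) * Phi_dens \<sigma> dF U (m u) x"
  note I = duhamel_integral_bounds[OF \<open>\<alpha> > 0\<close> _ continuous_on_subset[OF cont],
      of t "exp (- U x) / C" "C * exp (- U x)"]
  have decay: "exp (- \<alpha> * t) \<le> exp (- \<alpha> * s)" "exp (- \<alpha> * t) \<le> 1"
    using assms(1-3) by auto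
  have "(1 - exp (- \<alpha> * s)) / C * exp (- U x) \<le> exp (- U x) / C * (1 - exp (- \<alpha> * t))"
    using decay \<open>C > 0\<close> by (simp add: field_simps)
  also have "\<dots> \<le> ?I"
    using I(1) lower upper assms(2,3) by auto
  also have "\<dots> \<le> efp_dens \<sigma> \<alpha> dF U m \<rho> t x"
    unfolding efp_dens_def using \<open>\<rho> x \<ge> 0\<close> by simp
  finally show "(1 - exp (- \<alpha> * s)) / C * exp (- U x) \<le> efp_dens \<sigma> \<alpha> dF U m \<rho> t x" .
  have "?I \<le> C * exp (- U x) * (1 - exp (- \<alpha> * t))"
    using I(2) lower upper assms(2,3) by auto
  also have "\<dots> \<le> C * exp (- U x)"
    using \<open>C > 0\<close> by (simp add: mult_left_le)
  finally have "?I \<le> C * exp (- U x)" .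
  moreover have "exp (- \<alpha> * t) * \<rho> x \<le> \<rho> x"
    using decay \<open>\<rho> x \<ge> 0\<close> by (simp add: mult_left_le_one_le)
  ultimately show "efp_dens \<sigma> \<alpha> dF U m \<rho> t x \<le> C * exp (- U x) + \<rho> x"
    unfolding efp_dens_def by linarith
qed

lemma efp_dens_entropy_integrand_bound:
  assumes "\<alpha> > 0" "0 < s" "s \<le> t" "\<rho> x \<ge> 0" "C \<ge> 1"
    and cont: "continuous_on {0..} (\<lambda>u. Phi_dens \<sigma> dF U (m u) x)"
    and lower: "\<And>u. u \<ge> 0 \<Longrightarrow> exp (- U x) / C \<le> Phi_dens \<sigma> dF U (m u) x"
    and upper: "\<And>u. u \<ge> 0 \<Longrightarrow> Phi_dens \<sigma> dF U (m u) x \<le> C * exp (- U x)"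
  defines "a \<equiv> (1 - exp (- \<alpha> * s)) / C"
  shows "\<bar>ln (efp_dens \<sigma> \<alpha> dF U m \<rho> t x / exp (- U x))
      * (Phi_dens \<sigma> dF U (m t) x - efp_dens \<sigma> \<alpha> dF U m \<rho> t x)\<bar>
    \<le> \<bar>ln a\<bar> * (2 * C * exp (- U x) + \<rho> x) + 2 * C * (C * exp (- U x) + \<rho> x)
      + \<rho> x * ln (C + 1) + \<bar>\<rho> x * ln (\<rho> x / exp (- U x))\<bar>"
proof (rule abs_ln_ratio_mult_diff_le)
  show "a * exp (- U x) \<le> efp_dens \<sigma> \<alpha> dF U m \<rho> t x"
    "efp_dens \<sigma> \<alpha> dF U m \<rho> t x \<le> C * exp (- U x) + \<rho> x"
    using efp_dens_bounds[where \<rho> = \<rho> and x = x, OF assms(1-4) _ cont lower upper] assms(5)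
    unfolding a_def by auto
  show "0 < a"
    unfolding a_def using assms(1,2,5) by simp
  show "0 \<le> Phi_dens \<sigma> dF U (m t) x" "Phi_dens \<sigma> dF U (m t) x \<le> C * exp (- U x)"
    using lower[of t] upper[of t] assms(2,3,5) by (auto intro: order_trans[rotated])
qed (use assms(4,5) in auto)

theorem lemma20:
  fixes p p' \<sigma> \<alpha> s :: real
    and F :: "'a::euclidean_space measure \<Rightarrow> real"
    and dF :: "'a measure \<Rightarrow> 'a \<Rightarrow> real"
    and U :: "'a \<Rightarrow> real"
    and m :: "real \<Rightarrow> 'a measure"
    and \<rho>0 :: "'a \<Rightarrow> real"
  assumes "p \<ge> 1" and "\<sigma> > 0" and "\<alpha> > 0"
    and "standing_F p F dF"
    and "standing_U p U"
    and "\<exists>!\<mu>. \<mu> \<in> probs_q p \<and> Phi \<sigma> dF U \<mu> = \<mu>"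
    and "p' > p" and "m 0 \<in> probs_q p'"
    and "finite_rel_entropy (m 0) (gmeas U)"
    and "\<rho>0 \<in> borel_measurable lborel" and "\<forall>x. \<rho>0 x \<ge> 0"
    and "m 0 = density lborel (\<lambda>x. ennreal (\<rho>0 x))"
    and "efp_solution p \<sigma> \<alpha> dF U m"
    and "s > 0"
  shows "\<exists>f g0 :: 'a \<Rightarrow> real. integrable lborel f \<and> integrable lborel g0 \<and>
    (\<forall>t\<ge>s. \<forall>x.
       g0 x \<le> ln (efp_dens \<sigma> \<alpha> dF U m \<rho>0 t x / exp (- U x))
               * (Phi_dens \<sigma> dF U (m t) x - efp_dens \<sigma> \<alpha> dF U m \<rho>0 t x)
     \<and> ln (efp_dens \<sigma> \<alpha> dF U m \<rho>0 t x / exp (- U x))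
               * (Phi_dens \<sigma> dF U (m t) x - efp_dens \<sigma> \<alpha> dF U m \<rho>0 t x) \<le> f x)"
proof -
  obtain C where C: "C \<ge> 1"
    and lower: "\<And>u x. u \<ge> 0 \<Longrightarrow> exp (- U x) / C \<le> Phi_dens \<sigma> dF U (m u) x"
    and upper: "\<And>u x. u \<ge> 0 \<Longrightarrow> Phi_dens \<sigma> dF U (m u) x \<le> C * exp (- U x)"
    using efp_solution_Phi_dens_bounds[OF assms(4,5,13)] by blast
  have cont: "continuous_on {0..} (\<lambda>u. Phi_dens \<sigma> dF U (m u) x)" for x
    using assms(1) by (intro efp_solution_Phi_dens_continuous[OF _ assms(4,5,13)]) simp
  define bound where "bound x = \<bar>ln ((1 - exp (- \<alpha> * s)) / C)\<bar> * (2 * C * exp (- U x) + \<rho>0 x)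
    + 2 * C * (C * exp (- U x) + \<rho>0 x) + \<rho>0 x * ln (C + 1) + \<bar>\<rho>0 x * ln (\<rho>0 x / exp (- U x))\<bar>" for x
  have "m 0 \<in> probs"
    using assms(13) unfolding efp_solution_def probs_q_def by auto
  then have "integrable lborel \<rho>0" "integrable lborel (\<lambda>x. \<rho>0 x * ln (\<rho>0 x / exp (- U x)))"
    using assms(9-12) finite_rel_entropy_integrable[OF assms(5,10)]
    by (auto intro: integrable_prob_density simp: probs_def)
  then have "integrable lborel bound"
    unfolding bound_def using standing_UD(2)[OF assms(5)] by auto
  moreover have "\<bar>ln (efp_dens \<sigma> \<alpha> dF U m \<rho>0 t x / exp (- U x))
      * (Phi_dens \<sigma> dF U (m t) x - efp_dens \<sigma> \<alpha> dF U m \<rho>0 t x)\<bar> \<le> bound x" if "t \<ge> s" for t x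
    unfolding bound_def using assms(3,11,14) that C cont lower upper
    by (intro efp_dens_entropy_integrand_bound) auto
  ultimately show ?thesis
    by - (rule exI[of _ bound], rule exI[of _ "\<lambda>x. - bound x"], auto simp: abs_le_iff minus_le_iff)
qed

end
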